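(* Let $\Psi:[0,T]\times\Omega\to\mathscr K_c(E)$ be an $\mathbb F$-adapted set-valued martingale with $\Psi_T$ $p$-integrably bounded. Then for every $t\in[0,T]$, $$\overline{dec}_{\mathscr F_t}\big(\pi_t(\mathscr M^p_{sel}(\Psi))\big)=S^p_{\mathscr F_t}(\Psi_t),$$ where $\pi_t(\mathscr M^p_{sel}(\Psi))=\{\psi_t:\psi\in\mathscr M^p_{sel}(\Psi)\}$.
   Context: All Banach spaces are real. $E$ is a separable UMD Banach space; $T>0$, $p>1$. $(\Omega,\mathscr F,\mathbb P)$ carries a standard real Brownian motion $W$; $\mathbb F=(\mathscr F_t)$ is the natural filtration of $W$ augmented by null sets, $\mathscr F_T=\mathscr F$. $\mathscr K_c(E)$: nonempty closed convex subsets. Measurability of set-valued maps: $\{G\cap O\ne\emptyset\}$ measurable for open $O$; $S^p_{\mathscr G}(G)=\{g\in L^p(\Omega,\mathscr G;E):g\in G\text{ a.s.}\}$; $p$-integrably bounded: $\sup_{x\in G(\omega)}\|x\|\le v(\omega)$ a.s., $v\in L^p$. $\overline{dec}_{\mathscr F_t}(\Delta)$: smallest closed subset of $L^p(\Omega,\mathscr F_t;E)$ containing $\Delta$ and stable under $\sum_k\mathds 1_{A_k}h_k$ for finite $\mathscr F_t$-measurable partitions $(A_k)$. Set-valued conditional expectation $\mathbb E^{\mathscr G}(G)$: the $\mathscr G$-measurable closed-valued map with $S^p_{\mathscr G}(\mathbb E^{\mathscr G}G)=\mathrm{cl}_{L^p}\{\mathbb E^{\mathscr G}g:g\in S^p_{\mathscr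 F}(G)\}$. $\Psi$ is a set-valued martingale if $\mathbb E^{\mathscr F_s}\Psi_t=\Psi_s$ a.s. for $s\le t$. $\mathscr M^p_{sel}(\Psi)$: the set of $E$-valued $\mathbb F$-martingales $\psi$ with $\psi_t\in S^p_{\mathscr F_t}(\Psi_t)$ for every $t\in[0,T]$. *)

theory Defs
  imports "HOL-Probability.Probability"
begin

text \<open>E is modelled by a type 'e of class banach + second_countable_topology;
for a (real) Banach space second countability is the same as separability.\<close>

definition Lp_norm :: "'a measure \<Rightarrow> real \<Rightarrow> ('a \<Rightarrow> 'e::{banach,second_countable_topology}) \<Rightarrow> real" where
  "Lp_norm M p f = (\<integral>x. norm (f x) powr p \<partial>M) powr (1 / p)"

definition Lp_space :: "'a measure \<Rightarrow> 'a measure \<Rightarrow> real \<Rightarrow> ('a \<Rightarrow> 'e::{banach,second_countable_topology}) set" where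
  "Lp_space M G p = {f. f \<in> borel_measurable G \<and> integrable M (\<lambda>x. norm (f x) powr p)}"

definition Lp_closure :: "'a measure \<Rightarrow> 'a measure \<Rightarrow> real \<Rightarrow> ('a \<Rightarrow> 'e::{banach,second_countable_topology}) set \<Rightarrow> ('a \<Rightarrow> 'e) set" where
  "Lp_closure M G p A = {f \<in> Lp_space M G p. \<forall>e>0. \<exists>g\<in>A. Lp_norm M p (\<lambda>x. f x - g x) < e}"

definition Sp :: "'a measure \<Rightarrow> 'a measure \<Rightarrow> real \<Rightarrow> ('a \<Rightarrow> 'e::{banach,second_countable_topology} set) \<Rightarrow> ('a \<Rightarrow> 'e) set" where
  "Sp M G p X = {f \<in> Lp_space M G p. AE x in M. f x \<in> X x}"

definition setvalued_measurable :: "'a measure \<Rightarrow> ('a \<Rightarrow> 'e::topological_space set) \<Rightarrow> bool" where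
  "setvalued_measurable G X \<longleftrightarrow> (\<forall>U. open U \<longrightarrow> {x \<in> space G. X x \<inter> U \<noteq> {}} \<in> sets G)"

definition Kc_valued :: "'a measure \<Rightarrow> ('a \<Rightarrow> 'e::real_normed_vector set) \<Rightarrow> bool" where
  "Kc_valued M X \<longleftrightarrow> (\<forall>x\<in>space M. X x \<noteq> {} \<and> closed (X x) \<and> convex (X x))"

definition is_cond_exp :: "'a measure \<Rightarrow> 'a measure \<Rightarrow> ('a \<Rightarrow> 'e::{banach,second_countable_topology}) \<Rightarrow> ('a \<Rightarrow> 'e) \<Rightarrow> bool" where
  "is_cond_exp M G f h \<longleftrightarrow> h \<in> borel_measurable G \<and> integrable M h \<and>
     (\<forall>A\<in>sets G. set_lebesgue_integral M A h = set_lebesgue_integral M A f)"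

definition is_set_cond_exp :: "'a measure \<Rightarrow> 'a measure \<Rightarrow> real \<Rightarrow> ('a \<Rightarrow> 'e::{banach,second_countable_topology} set) \<Rightarrow> ('a \<Rightarrow> 'e set) \<Rightarrow> bool" where
  "is_set_cond_exp M G p X Y \<longleftrightarrow> setvalued_measurable G Y \<and> (\<forall>x\<in>space M. closed (Y x)) \<and>
     Sp M G p Y = Lp_closure M G p {h. \<exists>g\<in>Sp M M p X. is_cond_exp M G g h}"

definition set_martingale :: "'a measure \<Rightarrow> (real \<Rightarrow> 'a measure) \<Rightarrow> real \<Rightarrow> real \<Rightarrow> (real \<Rightarrow> 'a \<Rightarrow> 'e::{banach,second_countable_topology} set) \<Rightarrow> bool" where
  "set_martingale M F T p \<Psi> \<longleftrightarrow> (\<forall>s t. 0 \<le> s \<longrightarrow> s \<le> t \<longrightarrow> t \<le> T \<longrightarrow>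
     (\<exists>Y. is_set_cond_exp M (F s) p (\<Psi> t) Y \<and> (AE x in M. Y x = \<Psi> s x)))"

definition martingale_E :: "'a measure \<Rightarrow> (real \<Rightarrow> 'a measure) \<Rightarrow> real \<Rightarrow> (real \<Rightarrow> 'a \<Rightarrow> 'e::{banach,second_countable_topology}) \<Rightarrow> bool" where
  "martingale_E M F T \<psi> \<longleftrightarrow>
     (\<forall>t\<in>{0..T}. \<psi> t \<in> borel_measurable (F t) \<and> integrable M (\<psi> t)) \<and>
     (\<forall>s t. 0 \<le> s \<longrightarrow> s \<le> t \<longrightarrow> t \<le> T \<longrightarrow>
        (\<forall>A\<in>sets (F s). set_lebesgue_integral M A (\<psi> t) = set_lebesgue_integral M A (\<psi> s)))"

definition Msel :: "'a measure \<Rightarrow> (real \<Rightarrow> 'a measure) \<Rightarrow> real \<Rightarrow> real \<Rightarrow> (real \<Rightarrow> 'a \<Rightarrow> 'e::{banach,second_countable_topology} set) \<Rightarrow> (real \<Rightarrow> 'a \<Rightarrow> 'e) set" where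
  "Msel M F T p \<Psi> = {\<psi>. martingale_E M F T \<psi> \<and> (\<forall>t\<in>{0..T}. \<psi> t \<in> Sp M (F t) p (\<Psi> t))}"

definition decomposable :: "'a measure \<Rightarrow> 'a measure \<Rightarrow> ('a \<Rightarrow> 'e::real_vector) set \<Rightarrow> bool" where
  "decomposable M G D \<longleftrightarrow> (\<forall>(n::nat) (A::nat \<Rightarrow> 'a set) h.
     (\<forall>i<n. A i \<in> sets G \<and> h i \<in> D) \<and> disjoint_family_on A {..<n} \<and> (\<Union>i<n. A i) = space M
     \<longrightarrow> (\<lambda>x. \<Sum>i<n. indicator (A i) x *\<^sub>R h i x) \<in> D)"

definition dec_closure :: "'a measure \<Rightarrow> 'a measure \<Rightarrow> real \<Rightarrow> ('a \<Rightarrow> 'e::{banach,second_countable_topology}) set \<Rightarrow> ('a \<Rightarrow> 'e) set" where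
  "dec_closure M G p \<Delta> = \<Inter>{D. \<Delta> \<subseteq> D \<and> D \<subseteq> Lp_space M G p \<and> Lp_closure M G p D \<subseteq> D \<and> decomposable M G D}"

definition brownian_motion :: "'a measure \<Rightarrow> real \<Rightarrow> (real \<Rightarrow> 'a \<Rightarrow> real) \<Rightarrow> bool" where
  "brownian_motion M T W \<longleftrightarrow>
     (\<forall>t\<in>{0..T}. W t \<in> borel_measurable M) \<and>
     (\<forall>x\<in>space M. W 0 x = 0 \<and> continuous_on {0..T} (\<lambda>t. W t x)) \<and>
     (\<forall>s t. 0 \<le> s \<longrightarrow> s < t \<longrightarrow> t \<le> T \<longrightarrow>
        distributed M lborel (\<lambda>x. W t x - W s x) (\<lambda>y. ennreal (normal_density 0 (sqrt (t - s)) y))) \<and>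
     (\<forall>(n::nat) (ts::nat \<Rightarrow> real). 0 \<le> ts 0 \<and> (\<forall>i<n. ts i < ts (Suc i)) \<and> ts n \<le> T \<longrightarrow>
        prob_space.indep_vars M (\<lambda>_. borel) (\<lambda>i x. W (ts (Suc i)) x - W (ts i) x) {..<n})"

definition nat_filtration :: "'a measure \<Rightarrow> (real \<Rightarrow> 'a \<Rightarrow> real) \<Rightarrow> real \<Rightarrow> 'a measure" where
  "nat_filtration M W t = sigma (space M)
     ({W s -` B \<inter> space M | s B. s \<in> {0..t} \<and> B \<in> sets borel} \<union> null_sets M)"

text \<open>By passing to the joint law, it suffices to consider probability measures
  on the sequence space nat => 'e; martingale difference sequences are taken w.r.t. their own
  natural filtration (d_0 arbitrary, E[d_n | d_0..d_{n-1}] = 0 for n >= 1).\<close>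
definition umd :: "'e::{banach,second_countable_topology} itself \<Rightarrow> bool" where
  "umd _ \<longleftrightarrow> (\<exists>p>1. \<exists>\<beta>. \<forall>(P::(nat \<Rightarrow> 'e) measure) (d::nat \<Rightarrow> (nat \<Rightarrow> 'e) \<Rightarrow> 'e) (N::nat) (\<epsilon>::nat \<Rightarrow> real).
     prob_space P \<and>
     (\<forall>n. d n \<in> borel_measurable P \<and> integrable P (\<lambda>x. norm (d n x) powr p)) \<and>
     (\<forall>n\<ge>1. \<forall>A\<in>sets (sigma (space P) {d k -` B \<inter> space P | k B. k < n \<and> B \<in> sets borel}).
         set_lebesgue_integral P A (d n) = 0) \<and>
     (\<forall>n. \<epsilon> n \<in> {-1, 1})
     \<longrightarrow> Lp_norm P p (\<lambda>x. \<Sum>n<N. \<epsilon> n *\<^sub>R d n x) \<le> \<beta> * Lp_norm P p (\<lambda>x. \<Sum>n<N. d n x))"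

end

theory Submission
  imports Defs
begin

(* Each value psi_t of a martingale selection lies in S^p_{F_t}(Psi_t), which is closed in L^p
  and decomposable, so the dec-closure of pi_t(M_sel) is contained in it. Conversely,
  S^p_{F_t}(Psi_t) is by definition the L^p-closure of the conditional expectations E^{F_t} g of
  selections g of Psi_T, and each such g yields the martingale selection u |-> E^{F_u} g, whose
  value at u lies in S^p_{F_u}(Psi_u) for the same reason. Hence these conditional expectations
  already belong to pi_t(M_sel). *)

lemma powr_add_le_two_powr:
  fixes a b p :: real
  assumes "a \<ge> 0" "b \<ge> 0" "p > 0"
  shows "(a + b) powr p \<le> 2 powr p * (a powr p + b powr p)"
proof -
  have "(a + b) powr p \<le> (2 * max a b) powr p"
    using assms by (intro powr_mono2) auto
  also have "\<dots> = 2 powr p * max a b powr p"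
    using assms by (simp add: powr_mult)
  also have "\<dots> \<le> 2 powr p * (a powr p + b powr p)"
    by (intro mult_left_mono) (auto simp: max_def)
  finally show ?thesis .
qed

lemma le_one_add_powr:
  fixes a p :: real
  assumes "a \<ge> 0" "p \<ge> 1"
  shows "a \<le> 1 + a powr p"
proof (cases "a \<le> 1")
  case False
  then have "a powr 1 \<le> a powr p"
    using assms by (intro powr_mono) auto
  then show ?thesis
    using False by simp
qed (use assms in \<open>auto intro: add_increasing2\<close>)

lemma (in finite_measure) integrable_if_integrable_norm_powr:
  fixes g :: "'a \<Rightarrow> 'e::{banach,second_countable_topology}"
  assumes "p \<ge> 1" "g \<in> borel_measurable M" "integrable M (\<lambda>x. norm (g x) powr p)"
  shows "integrable M g"
proof (rule Bochner_Integration.integrable_bound)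
  show "integrable M (\<lambda>x. 1 + norm (g x) powr p)"
    using assms(3) by auto
  show "AE x in M. norm (g x) \<le> norm (1 + norm (g x) powr p)"
    using le_one_add_powr[OF norm_ge_zero assms(1)] by auto
qed (use assms(2) in auto)

lemma Lp_space_borel_measurable:
  "subalgebra M G \<Longrightarrow> f \<in> Lp_space M G p \<Longrightarrow> f \<in> borel_measurable M"
  unfolding Lp_space_def by (auto intro: measurable_from_subalg)

lemma integrable_norm_diff_powr:
  fixes f g :: "'a \<Rightarrow> 'e::{banach,second_countable_topology}"
  assumes sub: "subalgebra M G" and p: "p > 0"
    and f: "f \<in> Lp_space M G p" and g: "g \<in> Lp_space M G p"
  shows "integrable M (\<lambda>x. norm (f x - g x) powr p)"
proof (rule Bochner_Integration.integrable_bound)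
  show "integrable M (\<lambda>x. 2 powr p * (norm (f x) powr p + norm (g x) powr p))"
    using f g unfolding Lp_space_def by auto
  have "norm (f x - g x) powr p \<le> 2 powr p * (norm (f x) powr p + norm (g x) powr p)" for x
  proof -
    have "norm (f x - g x) powr p \<le> (norm (f x) + norm (g x)) powr p"
      using p by (intro powr_mono2 norm_triangle_ineq4) auto
    also have "\<dots> \<le> 2 powr p * (norm (f x) powr p + norm (g x) powr p)"
      using p by (intro powr_add_le_two_powr) auto
    finally show ?thesis .
  qed
  then show "AE x in M. norm (norm (f x - g x) powr p)
      \<le> norm (2 powr p * (norm (f x) powr p + norm (g x) powr p))"
    by auto
qed (use Lp_space_borel_measurable[OF sub f] Lp_space_borel_measurable[OF sub g] in measurable)

lemma Lp_closure_mono: "A \<subseteq> B \<Longrightarrow> Lp_closure M G p A \<subseteq> Lp_closure M G p B"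
  unfolding Lp_closure_def by blast

lemma Lp_closure_superset: "A \<inter> Lp_space M G p \<subseteq> Lp_closure M G p A"
  unfolding Lp_closure_def Lp_norm_def by force

lemma Lp_norm_tendsto_zero_AE_subseq:
  fixes u :: "nat \<Rightarrow> 'a \<Rightarrow> 'e::{banach,second_countable_topology}"
  assumes p: "p > 0" and u: "\<And>n. integrable M (\<lambda>x. norm (u n x) powr p)"
    and lim: "(\<lambda>n. Lp_norm M p (u n)) \<longlonglongrightarrow> 0"
  obtains r where "strict_mono r" "AE x in M. (\<lambda>n. u (r n) x) \<longlonglongrightarrow> 0"
proof -
  have "(\<lambda>n. Lp_norm M p (u n) powr p) \<longlonglongrightarrow> 0"
    using lim p by (intro tendsto_zero_powrI) (auto simp: Lp_norm_def)
  moreover have "Lp_norm M p (u n) powr p = (\<integral>x. norm (norm (u n x) powr p) \<partial>M)" for n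
    using p unfolding Lp_norm_def by (simp add: powr_powr integral_nonneg_AE)
  ultimately obtain r where r: "strict_mono r"
    and r_lim: "AE x in M. (\<lambda>n. norm (u (r n) x) powr p) \<longlonglongrightarrow> 0"
    using tendsto_L1_AE_subseq[where u="\<lambda>n x. norm (u n x) powr p", OF u] by auto
  from r_lim have "AE x in M. (\<lambda>n. u (r n) x) \<longlonglongrightarrow> 0"
  proof eventually_elim
    case (elim x)
    then have "(\<lambda>n. (norm (u (r n) x) powr p) powr (1 / p)) \<longlonglongrightarrow> 0"
      by (rule tendsto_zero_powrI[where b="1 / p"]) (use p in auto)
    then show ?case
      using p by (simp add: powr_powr tendsto_norm_zero_iff)
  qed
  with r show ?thesis
    using that by blast
qed

lemma Sp_cong_AE:
  assumes "AE x in M. X x = Y x"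
  shows "Sp M G p X = Sp M G p Y"
proof -
  have "(AE x in M. f x \<in> X x) \<longleftrightarrow> (AE x in M. f x \<in> Y x)" for f
  proof
    assume "AE x in M. f x \<in> X x"
    with assms show "AE x in M. f x \<in> Y x"
      by eventually_elim simp
  next
    assume "AE x in M. f x \<in> Y x"
    with assms show "AE x in M. f x \<in> X x"
      by eventually_elim simp
  qed
  then show ?thesis
    unfolding Sp_def by auto
qed

lemma Lp_closure_imp_AE_limit:
  fixes f :: "'a \<Rightarrow> 'e::{banach,second_countable_topology}"
  assumes sub: "subalgebra M G" and p: "p > 0" and A: "A \<subseteq> Lp_space M G p"
    and f: "f \<in> Lp_closure M G p A"
  obtains g where "\<And>n. g n \<in> A" "AE x in M. (\<lambda>n. g n x) \<longlonglongrightarrow> f x"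
proof -
  have f_Lp: "f \<in> Lp_space M G p"
    using f unfolding Lp_closure_def by auto
  have "\<forall>n. \<exists>g. g \<in> A \<and> Lp_norm M p (\<lambda>x. f x - g x) < 1 / Suc n"
  proof
    fix n :: nat
    have "(0::real) < 1 / Suc n"
      by simp
    then show "\<exists>g. g \<in> A \<and> Lp_norm M p (\<lambda>x. f x - g x) < 1 / Suc n"
      using f unfolding Lp_closure_def by blast
  qed
  then obtain g where g: "\<And>n. g n \<in> A"
    and g_close: "\<And>n. Lp_norm M p (\<lambda>x. f x - g n x) < 1 / Suc n"
    by metis
  have "(\<lambda>n. Lp_norm M p (\<lambda>x. f x - g n x)) \<longlonglongrightarrow> 0"
  proof (rule tendsto_sandwich[OF _ _ tendsto_const LIMSEQ_inverse_real_of_nat])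
    show "\<forall>\<^sub>F n in sequentially. 0 \<le> Lp_norm M p (\<lambda>x. f x - g n x)"
      by (simp add: Lp_norm_def)
    show "\<forall>\<^sub>F n in sequentially. Lp_norm M p (\<lambda>x. f x - g n x) \<le> inverse (real (Suc n))"
      using g_close by (simp add: less_imp_le inverse_eq_divide)
  qed
  moreover have "integrable M (\<lambda>x. norm (f x - g n x) powr p)" for n
    using g A by (intro integrable_norm_diff_powr[OF sub p f_Lp]) auto
  ultimately obtain r where "AE x in M. (\<lambda>n. f x - g (r n) x) \<longlonglongrightarrow> 0"
    using Lp_norm_tendsto_zero_AE_subseq[OF p, of M "\<lambda>n x. f x - g n x"] by blast
  then have "AE x in M. (\<lambda>n. g (r n) x) \<longlonglongrightarrow> f x"
  proof eventually_elim
    case (elim x)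
    have "(\<lambda>n. g (r n) x - f x) \<longlonglongrightarrow> 0"
      using tendsto_minus[OF elim] by simp
    then show ?case
      by (rule LIM_zero_cancel)
  qed
  with g show ?thesis
    by (rule that)
qed

lemma Lp_closure_Sp_subset:
  fixes X :: "'a \<Rightarrow> 'e::{banach,second_countable_topology} set"
  assumes sub: "subalgebra M G" and p: "p > 0" and closed: "\<forall>x\<in>space M. closed (X x)"
  shows "Lp_closure M G p (Sp M G p X) \<subseteq> Sp M G p X"
proof
  fix f assume f: "f \<in> Lp_closure M G p (Sp M G p X)"
  have "Sp M G p X \<subseteq> Lp_space M G p"
    by (auto simp: Sp_def)
  then obtain g where g: "\<And>n. g n \<in> Sp M G p X" and lim: "AE x in M. (\<lambda>n. g n x) \<longlonglongrightarrow> f x"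
    using Lp_closure_imp_AE_limit[OF sub p _ f] by blast
  have "AE x in M. \<forall>n. g n x \<in> X x"
    using g unfolding Sp_def by (auto simp: AE_all_countable)
  with lim AE_space have "AE x in M. f x \<in> X x"
    by eventually_elim (use closed in \<open>metis closed_sequentially\<close>)
  with f show "f \<in> Sp M G p X"
    unfolding Sp_def Lp_closure_def by auto
qed

lemma sum_indicator_scaleR_disjoint_family:
  fixes h :: "nat \<Rightarrow> 'a \<Rightarrow> 'b::real_vector"
  assumes "disjoint_family_on A {..<n}" "j < n" "x \<in> A j"
  shows "(\<Sum>i<n. indicator (A i) x *\<^sub>R h i x) = h j x"
proof -
  have "(\<Sum>i<n. indicator (A i) x *\<^sub>R h i x) = (\<Sum>i<n. if i = j then h i x else 0)"
    using assms by (intro sum.cong) (auto simp: disjoint_family_on_def indicator_def)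
  with assms show ?thesis
    by simp
qed

lemma Sp_decomposable:
  fixes X :: "'a \<Rightarrow> 'e::{banach,second_countable_topology} set"
  assumes sub: "subalgebra M G"
  shows "decomposable M G (Sp M G p X)"
  unfolding decomposable_def
proof (intro allI impI, elim conjE)
  fix n :: nat and A :: "nat \<Rightarrow> 'a set" and h
  assume Ah: "\<forall>i<n. A i \<in> sets G \<and> h i \<in> Sp M G p X"
    and disj: "disjoint_family_on A {..<n}" and cover: "(\<Union>i<n. A i) = space M"
  define F where "F x = (\<Sum>i<n. indicator (A i) x *\<^sub>R h i x)" for x
  have F_eq: "F x = h j x" if "j < n" "x \<in> A j" for x j
    unfolding F_def using disj that by (rule sum_indicator_scaleR_disjoint_family)
  have piece: "\<exists>j<n. x \<in> A j" if "x \<in> space M" for x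
    using cover that by auto
  have "h i \<in> borel_measurable G" if "i < n" for i
    using Ah that unfolding Sp_def Lp_space_def by auto
  then have F_G: "F \<in> borel_measurable G"
    unfolding F_def using Ah by (intro borel_measurable_sum borel_measurable_scaleR) auto
  have "integrable M (\<lambda>x. norm (F x) powr p)"
  proof (rule Bochner_Integration.integrable_bound)
    show "integrable M (\<lambda>x. \<Sum>i<n. norm (h i x) powr p)"
      using Ah unfolding Sp_def Lp_space_def by auto
    show "AE x in M. norm (norm (F x) powr p) \<le> norm (\<Sum>i<n. norm (h i x) powr p)"
    proof (rule AE_I2)
      fix x assume "x \<in> space M"
      then obtain j where j: "j < n" "x \<in> A j"
        using piece by blast
      then have "norm (F x) powr p \<le> (\<Sum>i<n. norm (h i x) powr p)"
        unfolding F_eq[OF j] by (intro member_le_sum) auto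
      then show "norm (norm (F x) powr p) \<le> norm (\<Sum>i<n. norm (h i x) powr p)"
        by (simp add: sum_nonneg)
    qed
  qed (use measurable_from_subalg[OF sub F_G] in measurable)
  moreover have "AE x in M. F x \<in> X x"
  proof -
    have "AE x in M. \<forall>i\<in>{..<n}. h i x \<in> X x"
      by (rule AE_finite_allI) (use Ah in \<open>auto simp: Sp_def\<close>)
    with AE_space show ?thesis
    proof eventually_elim
      case (elim x)
      then obtain j where "j < n" "x \<in> A j"
        using piece by blast
      with elim show ?case
        using F_eq by auto
    qed
  qed
  ultimately show "(\<lambda>x. \<Sum>i<n. indicator (A i) x *\<^sub>R h i x) \<in> Sp M G p X"
    using F_G unfolding Sp_def Lp_space_def F_def by auto
qed

lemma dec_closure_eq_Sp:
  fixes X :: "'a \<Rightarrow> 'e::{banach,second_countable_topology} set"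
  assumes sub: "subalgebra M G" and p: "p > 0" and closed: "\<forall>x\<in>space M. closed (X x)"
    and sel: "\<Delta> \<subseteq> Sp M G p X" and dense: "Sp M G p X \<subseteq> Lp_closure M G p \<Delta>"
  shows "dec_closure M G p \<Delta> = Sp M G p X"
proof
  show "dec_closure M G p \<Delta> \<subseteq> Sp M G p X"
    unfolding dec_closure_def
    using sel Lp_closure_Sp_subset[OF sub p closed] Sp_decomposable[OF sub]
    by (intro Inter_lower) (auto simp: Sp_def)
  show "Sp M G p X \<subseteq> dec_closure M G p \<Delta>"
    unfolding dec_closure_def
    using dense Lp_closure_mono[of \<Delta> _ M G p] by blast
qed

lemma integral_indicator_sum_scaleR:
  fixes c :: "'i \<Rightarrow> 'e::{banach,second_countable_topology}"
  assumes "finite I" "A \<in> sets M" "\<And>i. i \<in> I \<Longrightarrow> integrable M (f i)"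
  shows "(\<integral>x. indicator A x *\<^sub>R (\<Sum>i\<in>I. f i x *\<^sub>R c i) \<partial>M)
    = (\<Sum>i\<in>I. (\<integral>x. indicator A x * f i x \<partial>M) *\<^sub>R c i)"
proof -
  have int: "integrable M (\<lambda>x. indicator A x * f i x)" if "i \<in> I" for i
    using integrable_mult_indicator[OF assms(2) assms(3)[OF that]] by simp
  have "(\<integral>x. indicator A x *\<^sub>R (\<Sum>i\<in>I. f i x *\<^sub>R c i) \<partial>M)
      = (\<integral>x. (\<Sum>i\<in>I. (indicator A x * f i x) *\<^sub>R c i) \<partial>M)"
    by (simp add: scaleR_sum_right)
  also have "\<dots> = (\<Sum>i\<in>I. (\<integral>x. indicator A x * f i x \<partial>M) *\<^sub>R c i)"
    using int by (simp add: Bochner_Integration.integral_sum)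
  finally show ?thesis .
qed

lemma simple_approximation_L1:
  fixes g :: "'a \<Rightarrow> 'e::{banach,second_countable_topology}"
  assumes g: "integrable M g"
  obtains s where "\<And>i. simple_function M (s i)"
    and "\<And>x. x \<in> space M \<Longrightarrow> (\<lambda>i. s i x) \<longlonglongrightarrow> g x"
    and "\<And>i x. x \<in> space M \<Longrightarrow> norm (s i x) \<le> 2 * norm (g x)"
    and "(\<lambda>i. \<integral>x. norm (s i x - g x) \<partial>M) \<longlonglongrightarrow> 0"
proof -
  have g_meas [measurable]: "g \<in> borel_measurable M"
    using g by auto
  obtain s where simple: "\<And>i. simple_function M (s i)"
    and lim: "\<And>x. x \<in> space M \<Longrightarrow> (\<lambda>i. s i x) \<longlonglongrightarrow> g x"
    and bound: "\<And>i x. x \<in> space M \<Longrightarrow> norm (s i x) \<le> 2 * norm (g x)"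
    using borel_measurable_implies_sequence_metric[OF g_meas, of 0] unfolding dist_norm diff_zero by blast
  have [measurable]: "s i \<in> borel_measurable M" for i
    using simple by (rule borel_measurable_simple_function)
  have "(\<lambda>i. \<integral>x. norm (s i x - g x) \<partial>M) \<longlonglongrightarrow> (\<integral>x. 0 \<partial>M)"
  proof (rule integral_dominated_convergence[where w="\<lambda>x. 3 * norm (g x)"])
    show "AE x in M. (\<lambda>i. norm (s i x - g x)) \<longlonglongrightarrow> 0"
      using lim by (intro AE_I2 tendsto_norm_zero) (simp add: LIM_zero)
    show "AE x in M. norm (norm (s i x - g x)) \<le> 3 * norm (g x)" for i
    proof (rule AE_I2)
      fix x assume "x \<in> space M"
      then show "norm (norm (s i x - g x)) \<le> 3 * norm (g x)"
        using bound[of x i] norm_triangle_ineq4[of "s i x" "g x"] by simp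
    qed
  qed (use g in auto)
  then show ?thesis
    using that[OF simple lim bound] by simp
qed

(* HOL-Probability only provides real conditional expectations. E-valued ones are assembled
  from them level set by level set for simple functions, and obtained in general as a.e. limits
  along an L^1-Cauchy subsequence of simple approximations (is_cond_exp_exists). *)
definition simple_cond_exp ::
    "'a measure \<Rightarrow> 'a measure \<Rightarrow> ('a \<Rightarrow> 'e::real_vector) \<Rightarrow> 'a \<Rightarrow> 'e" where
  "simple_cond_exp M F s x =
     (\<Sum>y\<in>s ` space M. real_cond_exp M F (indicator (s -` {y} \<inter> space M)) x *\<^sub>R y)"

context finite_measure_subalgebra
begin

lemma is_cond_exp_AE_unique:
  fixes f h1 h2 :: "'a \<Rightarrow> 'e::{banach,second_countable_topology}"
  assumes h1: "is_cond_exp M F f h1" and h2: "is_cond_exp M F f h2"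
  shows "AE x in M. h1 x = h2 x"
proof -
  let ?MF = "restr_to_subalg M F"
  interpret MF: sigma_finite_measure ?MF
    by (rule sigma_fin_subalg)
  have [measurable]: "h1 \<in> borel_measurable F" "h2 \<in> borel_measurable F"
    using h1 h2 unfolding is_cond_exp_def by auto
  have "AE x in ?MF. h1 x = h2 x"
  proof (rule MF.density_unique_banach)
    show "integrable ?MF h1" "integrable ?MF h2"
      using h1 h2 unfolding is_cond_exp_def by (auto intro: integrable_in_subalg[OF subalg])
    fix A assume "A \<in> sets ?MF"
    then have A [measurable]: "A \<in> sets F"
      using sets_restr_to_subalg[OF subalg] by simp
    have "set_lebesgue_integral ?MF A h1 = set_lebesgue_integral M A h1"
      unfolding set_lebesgue_integral_def by (rule integral_subalgebra2[OF subalg]) measurable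
    also have "\<dots> = set_lebesgue_integral M A h2"
      using h1 h2 A unfolding is_cond_exp_def by auto
    also have "\<dots> = set_lebesgue_integral ?MF A h2"
      unfolding set_lebesgue_integral_def by (rule integral_subalgebra2[OF subalg, symmetric]) measurable
    finally show "set_lebesgue_integral ?MF A h1 = set_lebesgue_integral ?MF A h2" .
  qed
  then show ?thesis
    by (rule AE_restr_to_subalg[OF subalg])
qed

lemma is_cond_exp_diff:
  fixes f1 f2 h1 h2 :: "'a \<Rightarrow> 'e::{banach,second_countable_topology}"
  assumes f1: "integrable M f1" and f2: "integrable M f2"
    and h1: "is_cond_exp M F f1 h1" and h2: "is_cond_exp M F f2 h2"
  shows "is_cond_exp M F (\<lambda>x. f1 x - f2 x) (\<lambda>x. h1 x - h2 x)"
  unfolding is_cond_exp_def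
proof (intro conjI ballI)
  show "(\<lambda>x. h1 x - h2 x) \<in> borel_measurable F" "integrable M (\<lambda>x. h1 x - h2 x)"
    using h1 h2 unfolding is_cond_exp_def by auto
  fix A assume A: "A \<in> sets F"
  then have "A \<in> sets M"
    using subalg by (auto simp: subalgebra_def)
  then show "set_lebesgue_integral M A (\<lambda>x. h1 x - h2 x) = set_lebesgue_integral M A (\<lambda>x. f1 x - f2 x)"
    using h1 h2 f1 f2 A unfolding is_cond_exp_def set_lebesgue_integral_def scaleR_diff_right
    by (simp add: integrable_mult_indicator)
qed

lemma integrable_simple_function_finite:
  fixes s :: "'a \<Rightarrow> 'e::{banach,second_countable_topology}"
  shows "simple_function M s \<Longrightarrow> integrable M s"
  by (rule integrable_simple_function) (auto simp: less_top[symmetric])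

lemma integrable_real_indicator_finite [simp]:
  "A \<in> sets M \<Longrightarrow> integrable M (indicat_real A)"
  by (auto simp: less_top[symmetric])

lemma is_cond_exp_simple_cond_exp:
  fixes s :: "'a \<Rightarrow> 'e::{banach,second_countable_topology}"
  assumes s: "simple_function M s"
  shows "is_cond_exp M F s (simple_cond_exp M F s)"
  unfolding is_cond_exp_def
proof (intro conjI ballI)
  let ?B = "\<lambda>y. s -` {y} \<inter> space M"
  have fin: "finite (s ` space M)"
    using s by (rule simple_functionD(1))
  have [measurable]: "?B y \<in> sets M" for y
    using s by (rule simple_functionD(2))
  have int_B: "integrable M (indicat_real (?B y))" for y
    by simp
  show "simple_cond_exp M F s \<in> borel_measurable F"
    unfolding simple_cond_exp_def by measurable
  show "integrable M (simple_cond_exp M F s)"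
    unfolding simple_cond_exp_def using int_B
    by (intro Bochner_Integration.integrable_sum integrable_scaleR_left real_cond_exp_int(1))
  fix A assume A: "A \<in> sets F"
  then have A_M: "A \<in> sets M"
    using subalg by (auto simp: subalgebra_def)
  have "set_lebesgue_integral M A (simple_cond_exp M F s)
      = (\<Sum>y\<in>s ` space M. (\<integral>x. indicator A x * real_cond_exp M F (indicator (?B y)) x \<partial>M) *\<^sub>R y)"
    unfolding set_lebesgue_integral_def simple_cond_exp_def
    using int_B by (intro integral_indicator_sum_scaleR[OF fin A_M]) auto
  also have "\<dots> = (\<Sum>y\<in>s ` space M. (\<integral>x. indicator A x * indicator (?B y) x \<partial>M) *\<^sub>R y)"
    using real_cond_exp_intA[OF int_B A] by (simp add: set_lebesgue_integral_def)
  also have "\<dots> = (\<integral>x. indicator A x *\<^sub>R (\<Sum>y\<in>s ` space M. indicator (?B y) x *\<^sub>R y) \<partial>M)"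
    by (rule integral_indicator_sum_scaleR[OF fin A_M, symmetric]) (simp add: int_B)
  also have "\<dots> = set_lebesgue_integral M A s"
    unfolding set_lebesgue_integral_def
    by (intro Bochner_Integration.integral_cong)
       (simp_all add: simple_function_indicator_representation_banach[OF s, symmetric])
  finally show "set_lebesgue_integral M A (simple_cond_exp M F s) = set_lebesgue_integral M A s" .
qed

lemma norm_simple_cond_exp_le:
  fixes s :: "'a \<Rightarrow> 'e::{banach,second_countable_topology}"
  assumes s: "simple_function M s"
  shows "AE x in M. norm (simple_cond_exp M F s x) \<le> real_cond_exp M F (\<lambda>x. norm (s x)) x"
proof -
  let ?S = "s ` space M" and ?B = "\<lambda>y. s -` {y} \<inter> space M"
  have fin: "finite ?S"
    using s by (rule simple_functionD(1))
  have [measurable]: "?B y \<in> sets M" for y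
    using s by (rule simple_functionD(2))
  have [measurable]: "s \<in> borel_measurable M"
    using s by (rule borel_measurable_simple_function)
  have norm_s: "norm (s x) = (\<Sum>y\<in>?S. norm y * indicator (?B y) x)" if "x \<in> space M" for x
  proof -
    have "(\<Sum>y\<in>?S. norm y * indicator (?B y) x) = (\<Sum>y\<in>?S. if y = s x then norm y else 0)"
      using that by (intro sum.cong) (auto simp: indicator_def)
    with that fin show ?thesis
      by simp
  qed
  have pos: "AE x in M. \<forall>y\<in>?S. real_cond_exp M F (indicator (?B y)) x \<ge> 0"
    by (rule AE_finite_allI[OF fin], rule real_cond_exp_pos) auto
  have "AE x in M. real_cond_exp M F (\<lambda>x. norm (s x)) x
      = real_cond_exp M F (\<lambda>x. \<Sum>y\<in>?S. norm y * indicator (?B y) x) x"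
    by (rule real_cond_exp_cong) (auto simp: norm_s)
  moreover have "AE x in M. real_cond_exp M F (\<lambda>x. \<Sum>y\<in>?S. norm y * indicator (?B y) x) x
      = (\<Sum>y\<in>?S. real_cond_exp M F (\<lambda>x. norm y * indicator (?B y) x) x)"
    by (rule real_cond_exp_sum) auto
  moreover have "AE x in M. \<forall>y\<in>?S. real_cond_exp M F (\<lambda>x. norm y * indicator (?B y) x) x
      = norm y * real_cond_exp M F (indicator (?B y)) x"
    by (rule AE_finite_allI[OF fin], rule real_cond_exp_cmult) auto
  ultimately show ?thesis
    using pos
  proof eventually_elim
    case (elim x)
    have "norm (simple_cond_exp M F s x) \<le> (\<Sum>y\<in>?S. norm (real_cond_exp M F (indicator (?B y)) x *\<^sub>R y))"
      unfolding simple_cond_exp_def by (rule norm_sum)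
    also have "\<dots> = (\<Sum>y\<in>?S. norm y * real_cond_exp M F (indicator (?B y)) x)"
      using elim(4) by (intro sum.cong) auto
    also have "\<dots> = real_cond_exp M F (\<lambda>x. norm (s x)) x"
      using elim(1-3) by simp
    finally show ?case .
  qed
qed

lemma norm_simple_cond_exp_le_cond_exp_norm:
  fixes s g :: "'a \<Rightarrow> 'e::{banach,second_countable_topology}"
  assumes s: "simple_function M s" and g: "integrable M g"
    and bound: "\<And>x. x \<in> space M \<Longrightarrow> norm (s x) \<le> c * norm (g x)"
  shows "AE x in M. norm (simple_cond_exp M F s x) \<le> c * real_cond_exp M F (\<lambda>x. norm (g x)) x"
proof -
  have "AE x in M. real_cond_exp M F (\<lambda>x. norm (s x)) x \<le> real_cond_exp M F (\<lambda>x. c * norm (g x)) x"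
    using bound integrable_simple_function_finite[OF s] g by (intro real_cond_exp_mono) auto
  moreover have "AE x in M. real_cond_exp M F (\<lambda>x. c * norm (g x)) x
      = c * real_cond_exp M F (\<lambda>x. norm (g x)) x"
    using g by (intro real_cond_exp_cmult) auto
  ultimately show ?thesis
    using norm_simple_cond_exp_le[OF s]
    by eventually_elim simp
qed

lemma integral_norm_simple_cond_exp_diff_le:
  fixes s1 s2 :: "'a \<Rightarrow> 'e::{banach,second_countable_topology}"
  assumes s1: "simple_function M s1" and s2: "simple_function M s2"
  shows "(\<integral>x. norm (simple_cond_exp M F s1 x - simple_cond_exp M F s2 x) \<partial>M)
    \<le> (\<integral>x. norm (s1 x - s2 x) \<partial>M)"
proof -
  let ?E = "simple_cond_exp M F"
  have s: "simple_function M (\<lambda>x. s1 x - s2 x)"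
    using simple_function_compose2[where h="(-)", OF s1 s2] by simp
  have "is_cond_exp M F (\<lambda>x. s1 x - s2 x) (\<lambda>x. ?E s1 x - ?E s2 x)"
    by (intro is_cond_exp_diff integrable_simple_function_finite is_cond_exp_simple_cond_exp s1 s2)
  from is_cond_exp_AE_unique[OF this is_cond_exp_simple_cond_exp[OF s]]
  have "AE x in M. ?E s1 x - ?E s2 x = ?E (\<lambda>x. s1 x - s2 x) x" .
  with norm_simple_cond_exp_le[OF s]
  have le: "AE x in M. norm (?E s1 x - ?E s2 x) \<le> real_cond_exp M F (\<lambda>x. norm (s1 x - s2 x)) x"
    by eventually_elim simp
  have int: "integrable M (\<lambda>x. norm (s1 x - s2 x))"
    using integrable_simple_function_finite[OF s] by auto
  have "(\<integral>x. norm (?E s1 x - ?E s2 x) \<partial>M) \<le> (\<integral>x. real_cond_exp M F (\<lambda>x. norm (s1 x - s2 x)) x \<partial>M)"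
    using is_cond_exp_simple_cond_exp[OF s1] is_cond_exp_simple_cond_exp[OF s2] int
    by (intro integral_mono_AE le) (auto simp: is_cond_exp_def)
  also have "\<dots> = (\<integral>x. norm (s1 x - s2 x) \<partial>M)"
    using int by (rule real_cond_exp_int(2))
  finally show ?thesis .
qed

lemma simple_cond_exp_L1_Cauchy:
  fixes s :: "nat \<Rightarrow> 'a \<Rightarrow> 'e::{banach,second_countable_topology}"
  assumes s: "\<And>i. simple_function M (s i)" and g: "integrable M g"
    and lim: "(\<lambda>i. \<integral>x. norm (s i x - g x) \<partial>M) \<longlonglongrightarrow> 0" and e: "e > 0"
  shows "\<exists>N. \<forall>i\<ge>N. \<forall>j\<ge>N.
    (\<integral>x. norm (simple_cond_exp M F (s i) x - simple_cond_exp M F (s j) x) \<partial>M) < e"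
proof -
  have int: "integrable M (s i)" for i
    using s by (rule integrable_simple_function_finite)
  obtain N where N: "\<And>i. i \<ge> N \<Longrightarrow> (\<integral>x. norm (s i x - g x) \<partial>M) < e / 2"
    using lim[unfolded LIMSEQ_def, rule_format, of "e / 2"] e by auto
  have "(\<integral>x. norm (simple_cond_exp M F (s i) x - simple_cond_exp M F (s j) x) \<partial>M) < e"
    if "i \<ge> N" "j \<ge> N" for i j
  proof -
    have "(\<integral>x. norm (simple_cond_exp M F (s i) x - simple_cond_exp M F (s j) x) \<partial>M)
        \<le> (\<integral>x. norm (s i x - s j x) \<partial>M)"
      by (rule integral_norm_simple_cond_exp_diff_le[OF s s])
    also have "\<dots> \<le> (\<integral>x. norm (s i x - g x) + norm (s j x - g x) \<partial>M)"
      using int g dist_triangle2[of "s i _" "s j _" "g _"]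
      by (intro integral_mono) (auto simp: dist_norm)
    also have "\<dots> = (\<integral>x. norm (s i x - g x) \<partial>M) + (\<integral>x. norm (s j x - g x) \<partial>M)"
      using int g by (intro Bochner_Integration.integral_add) auto
    also have "\<dots> < e"
      using N[OF that(1)] N[OF that(2)] by linarith
    finally show ?thesis .
  qed
  then show ?thesis
    by blast
qed

lemma is_cond_exp_AE_limit:
  fixes f h :: "nat \<Rightarrow> 'a \<Rightarrow> 'e::{banach,second_countable_topology}"
  assumes f: "\<And>i. integrable M (f i)" and h: "\<And>i. is_cond_exp M F (f i) (h i)"
    and f_lim: "AE x in M. (\<lambda>i. f i x) \<longlonglongrightarrow> g x" and h_lim: "AE x in M. (\<lambda>i. h i x) \<longlonglongrightarrow> C x"
    and f_bound: "\<And>i. AE x in M. norm (f i x) \<le> v x" and v: "integrable M v"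
    and h_bound: "\<And>i. AE x in M. norm (h i x) \<le> w x" and w: "integrable M w"
    and g_meas: "g \<in> borel_measurable M" and C_meas: "C \<in> borel_measurable F"
  shows "is_cond_exp M F g C"
proof -
  have [measurable]: "C \<in> borel_measurable M" "g \<in> borel_measurable M"
    using measurable_from_subalg[OF subalg C_meas] g_meas by auto
  have [measurable]: "f i \<in> borel_measurable M" "h i \<in> borel_measurable M" for i
    using f h by (auto simp: is_cond_exp_def intro: borel_measurable_integrable)
  have set_integral_lim:
    "(\<lambda>i. set_lebesgue_integral M A (u i)) \<longlonglongrightarrow> set_lebesgue_integral M A l"
    if "A \<in> sets M" "AE x in M. (\<lambda>i. u i x) \<longlonglongrightarrow> l x" "\<And>i. AE x in M. norm (u i x) \<le> d x"
      "integrable M d" "\<And>i. u i \<in> borel_measurable M" "l \<in> borel_measurable M"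
    for A and u :: "nat \<Rightarrow> 'a \<Rightarrow> 'e" and l d
    unfolding set_lebesgue_integral_def
  proof (rule integral_dominated_convergence[where w=d])
    show "AE x in M. (\<lambda>i. indicator A x *\<^sub>R u i x) \<longlonglongrightarrow> indicator A x *\<^sub>R l x"
      using that(2) by eventually_elim (auto intro: tendsto_scaleR)
    show "AE x in M. norm (indicator A x *\<^sub>R u i x) \<le> d x" for i
      using that(3)[of i] by eventually_elim (auto simp: indicator_def intro: order_trans[OF norm_ge_zero])
  qed (use that in auto)
  have "integrable M C"
    by (rule integrable_dominated_convergence[OF _ _ w h_lim h_bound]) auto
  moreover have "set_lebesgue_integral M A C = set_lebesgue_integral M A g" if A: "A \<in> sets F" for A
  proof -
    have A_M: "A \<in> sets M"
      using A subalg by (auto simp: subalgebra_def)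
    have "set_lebesgue_integral M A (h i) = set_lebesgue_integral M A (f i)" for i
      using h A by (auto simp: is_cond_exp_def)
    then have g_lim: "(\<lambda>i. set_lebesgue_integral M A (h i)) \<longlonglongrightarrow> set_lebesgue_integral M A g"
      using set_integral_lim[OF A_M f_lim f_bound v] by simp
    have "(\<lambda>i. set_lebesgue_integral M A (h i)) \<longlonglongrightarrow> set_lebesgue_integral M A C"
      using set_integral_lim[OF A_M h_lim h_bound w] by simp
    from this g_lim show ?thesis
      by (rule LIMSEQ_unique)
  qed
  ultimately show ?thesis
    using C_meas by (auto simp: is_cond_exp_def)
qed

lemma is_cond_exp_exists:
  fixes g :: "'a \<Rightarrow> 'e::{banach,second_countable_topology}"
  assumes g: "integrable M g"
  obtains C where "is_cond_exp M F g C"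
    and "AE x in M. norm (C x) \<le> 2 * real_cond_exp M F (\<lambda>x. norm (g x)) x"
proof -
  obtain s where s: "\<And>i. simple_function M (s i)"
    and s_lim: "\<And>x. x \<in> space M \<Longrightarrow> (\<lambda>i. s i x) \<longlonglongrightarrow> g x"
    and s_bound: "\<And>i x. x \<in> space M \<Longrightarrow> norm (s i x) \<le> 2 * norm (g x)"
    and s_L1: "(\<lambda>i. \<integral>x. norm (s i x - g x) \<partial>M) \<longlonglongrightarrow> 0"
    using simple_approximation_L1[OF g] by blast
  define h where "h i = simple_cond_exp M F (s i)" for i
  have h: "is_cond_exp M F (s i) (h i)" for i
    unfolding h_def using s by (rule is_cond_exp_simple_cond_exp)
  then have h_int: "integrable M (h i)" and [measurable]: "h i \<in> borel_measurable F" for i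
    by (auto simp: is_cond_exp_def)
  have "\<exists>N. \<forall>i\<ge>N. \<forall>j\<ge>N. (\<integral>x. norm (h i x - h j x) \<partial>M) < e" if "e > 0" for e
    unfolding h_def using simple_cond_exp_L1_Cauchy[OF s g s_L1 that] .
  then obtain r where r: "strict_mono r" and Cauchy: "AE x in M. Cauchy (\<lambda>i. h (r i) x)"
    using cauchy_L1_AE_cauchy_subseq[where s=h, OF h_int] by blast
  define C where "C x = lim (\<lambda>i. h (r i) x)" for x
  have C_lim: "AE x in M. (\<lambda>i. h (r i) x) \<longlonglongrightarrow> C x"
    using Cauchy by eventually_elim (simp add: C_def Cauchy_convergent_iff convergent_LIMSEQ_iff)
  let ?w = "\<lambda>x. 2 * real_cond_exp M F (\<lambda>x. norm (g x)) x"
  have h_bound: "AE x in M. norm (h i x) \<le> ?w x" for i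
    unfolding h_def using s g s_bound by (rule norm_simple_cond_exp_le_cond_exp_norm)
  have C: "is_cond_exp M F g C"
  proof (rule is_cond_exp_AE_limit[where f="\<lambda>i. s (r i)" and h="\<lambda>i. h (r i)" and w="?w"])
    show "AE x in M. (\<lambda>i. s (r i) x) \<longlonglongrightarrow> g x"
      using s_lim LIMSEQ_subseq_LIMSEQ[OF _ r] by (auto simp: comp_def)
    show "AE x in M. norm (s (r i) x) \<le> 2 * norm (g x)" for i
      using s_bound by auto
    show "C \<in> borel_measurable F"
      unfolding C_def by measurable
  qed (use C_lim h_bound h integrable_simple_function_finite[OF s] g in auto)
  have "AE x in M. \<forall>i. norm (h i x) \<le> ?w x"
    using h_bound by (simp add: AE_all_countable)
  with C_lim have "AE x in M. norm (C x) \<le> ?w x"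
  proof eventually_elim
    case (elim x)
    show ?case
      by (rule LIMSEQ_le_const2[OF tendsto_norm[OF elim(1)]]) (use elim(2) in auto)
  qed
  with C show ?thesis
    by (rule that)
qed

lemma integrable_cond_exp_norm_add_one_powr:
  fixes g :: "'a \<Rightarrow> 'e::{banach,second_countable_topology}"
  assumes p: "p \<ge> 1" and g: "integrable M g" and g_p: "integrable M (\<lambda>x. norm (g x) powr p)"
  shows "integrable M (\<lambda>x. real_cond_exp M F (\<lambda>x. norm (g x) + 1) x powr p)"
proof (rule integrable_convex_cond_exp[where I="{0<..}" and a=0])
  show "integrable M (\<lambda>x. norm (g x) + 1)"
    using g by auto
  show "integrable M (\<lambda>x. (norm (g x) + 1) powr p)"
  proof (rule Bochner_Integration.integrable_bound)
    show "integrable M (\<lambda>x. 2 powr p * (norm (g x) powr p + 1 powr p))"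
      using g_p by auto
    show "AE x in M. norm ((norm (g x) + 1) powr p) \<le> norm (2 powr p * (norm (g x) powr p + 1 powr p))"
      using powr_add_le_two_powr[OF norm_ge_zero zero_le_one, of p] p by auto
  qed (use g in measurable)
qed (use powr_convex[OF p] in \<open>auto simp: add_nonneg_pos\<close>)

lemma Lp_space_is_cond_exp:
  fixes g h :: "'a \<Rightarrow> 'e::{banach,second_countable_topology}"
  assumes p: "p \<ge> 1" and g: "g \<in> Lp_space M M p" and h: "is_cond_exp M F g h"
  shows "h \<in> Lp_space M F p"
proof -
  have [measurable]: "g \<in> borel_measurable M" and g_p: "integrable M (\<lambda>x. norm (g x) powr p)"
    using g by (auto simp: Lp_space_def)
  have g_int: "integrable M g"
    by (rule integrable_if_integrable_norm_powr[OF p _ g_p]) measurable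
  obtain C where C: "is_cond_exp M F g C"
    and C_bound: "AE x in M. norm (C x) \<le> 2 * real_cond_exp M F (\<lambda>x. norm (g x)) x"
    using is_cond_exp_exists[OF g_int] by blast
  have [measurable]: "h \<in> borel_measurable M"
    using h measurable_from_subalg[OF subalg] by (auto simp: is_cond_exp_def)
  \<comment> \<open>shifted by 1 so that Jensen's inequality applies on the open interval \<open>{0<..}\<close>\<close>
  let ?E = "real_cond_exp M F (\<lambda>x. norm (g x) + 1)"
  have "AE x in M. real_cond_exp M F (\<lambda>x. norm (g x)) x \<le> ?E x"
    using g_int by (intro real_cond_exp_mono) auto
  with is_cond_exp_AE_unique[OF h C] C_bound
  have h_dom: "AE x in M. norm (norm (h x) powr p) \<le> norm (2 powr p * ?E x powr p)"
  proof eventually_elim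
    case (elim x)
    then have le: "norm (h x) \<le> 2 * ?E x"
      by simp
    then have "norm (h x) powr p \<le> (2 * ?E x) powr p"
      using p by (intro powr_mono2) auto
    also have "\<dots> = 2 powr p * ?E x powr p"
      using order_trans[OF norm_ge_zero le] by (simp add: powr_mult)
    finally show ?case
      by simp
  qed
  have "integrable M (\<lambda>x. norm (h x) powr p)"
    by (rule Bochner_Integration.integrable_bound[OF _ _ h_dom])
      (use integrable_cond_exp_norm_add_one_powr[OF p g_int g_p] in auto)
  then show ?thesis
    using h by (auto simp: Lp_space_def is_cond_exp_def)
qed

end

definition cond_exp_selections :: "'a measure \<Rightarrow> 'a measure \<Rightarrow> real \<Rightarrow>
    ('a \<Rightarrow> 'e::{banach,second_countable_topology} set) \<Rightarrow> ('a \<Rightarrow> 'e) set"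
  where "cond_exp_selections M G p X = {h. \<exists>g\<in>Sp M M p X. is_cond_exp M G g h}"

lemma Sp_eq_Lp_closure_cond_exp_selections:
  assumes "set_martingale M F T p \<Psi>" "u \<in> {0..T}"
  shows "Sp M (F u) p (\<Psi> u) = Lp_closure M (F u) p (cond_exp_selections M (F u) p (\<Psi> T))"
proof -
  obtain Y where "is_set_cond_exp M (F u) p (\<Psi> T) Y" "AE x in M. Y x = \<Psi> u x"
    using assms unfolding set_martingale_def by auto
  then show ?thesis
    using Sp_cong_AE[where X=Y and Y="\<Psi> u"] unfolding is_set_cond_exp_def cond_exp_selections_def by auto
qed

lemma martingale_E_if_is_cond_exp:
  assumes ce: "\<And>u. u \<in> {0..T} \<Longrightarrow> is_cond_exp M (F u) g (\<psi> u)"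
    and mono: "\<And>s u. s \<le> u \<Longrightarrow> sets (F s) \<subseteq> sets (F u)"
  shows "martingale_E M F T \<psi>"
  unfolding martingale_E_def
proof (intro conjI ballI allI impI)
  fix u assume "u \<in> {0..T}"
  then show "\<psi> u \<in> borel_measurable (F u)" "integrable M (\<psi> u)"
    using ce by (auto simp: is_cond_exp_def)
next
  fix s u A assume su: "0 \<le> s" "s \<le> u" "u \<le> T" and A: "A \<in> sets (F s)"
  then have "set_lebesgue_integral M A (\<psi> u) = set_lebesgue_integral M A g"
    using ce[of u] mono[of s u] by (auto simp: is_cond_exp_def)
  also have "\<dots> = set_lebesgue_integral M A (\<psi> s)"
    using ce[of s] su A by (auto simp: is_cond_exp_def)
  finally show "set_lebesgue_integral M A (\<psi> u) = set_lebesgue_integral M A (\<psi> s)" .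
qed

lemma finite_measure_subalgebraI:
  "finite_measure M \<Longrightarrow> subalgebra M G \<Longrightarrow> finite_measure_subalgebra M G"
  by (simp add: finite_measure_subalgebra_def finite_measure_subalgebra_axioms_def)

lemma cond_exp_process_exists:
  fixes g :: "'a \<Rightarrow> 'e::{banach,second_countable_topology}"
  assumes M: "finite_measure M" and sub: "\<And>u. u \<in> {0..T} \<Longrightarrow> subalgebra M (F u)"
    and g: "integrable M g" and h: "is_cond_exp M (F t) g h"
  obtains \<psi> where "\<And>u. u \<in> {0..T} \<Longrightarrow> is_cond_exp M (F u) g (\<psi> u)" and "\<psi> t = h"
proof -
  define \<psi> where "\<psi> u = (if u = t then h else SOME c. is_cond_exp M (F u) g c)" for u
  have "is_cond_exp M (F u) g (\<psi> u)" if u: "u \<in> {0..T}" for u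
  proof (cases "u = t")
    case True
    with h show ?thesis
      by (simp add: \<psi>_def)
  next
    case False
    have "finite_measure_subalgebra M (F u)"
      using M sub[OF u] by (rule finite_measure_subalgebraI)
    then obtain c where "is_cond_exp M (F u) g c"
      by (rule finite_measure_subalgebra.is_cond_exp_exists[OF _ g]) (erule that)
    then have "is_cond_exp M (F u) g (SOME c. is_cond_exp M (F u) g c)"
      by (rule someI[where P="is_cond_exp M (F u) g"])
    with False show ?thesis
      by (simp add: \<psi>_def)
  qed
  moreover have "\<psi> t = h"
    by (simp add: \<psi>_def)
  ultimately show ?thesis
    by (rule that)
qed

lemma cond_exp_selections_subset_martingale_selections:
  fixes \<Psi> :: "real \<Rightarrow> 'a \<Rightarrow> 'e::{banach,second_countable_topology} set"
  assumes M: "finite_measure M" and sub: "\<And>u. u \<in> {0..T} \<Longrightarrow> subalgebra M (F u)"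
    and mono: "\<And>s u. s \<le> u \<Longrightarrow> sets (F s) \<subseteq> sets (F u)"
    and p: "p \<ge> 1" and mart: "set_martingale M F T p \<Psi>" and t: "t \<in> {0..T}"
  shows "cond_exp_selections M (F t) p (\<Psi> T) \<subseteq> {\<psi> t | \<psi>. \<psi> \<in> Msel M F T p \<Psi>}"
proof
  fix h assume "h \<in> cond_exp_selections M (F t) p (\<Psi> T)"
  then obtain g where g: "g \<in> Sp M M p (\<Psi> T)" and h: "is_cond_exp M (F t) g h"
    unfolding cond_exp_selections_def by blast
  have F: "finite_measure_subalgebra M (F u)" if "u \<in> {0..T}" for u
    using M sub[OF that] by (rule finite_measure_subalgebraI)
  have g_Lp: "g \<in> Lp_space M M p"
    using g by (simp add: Sp_def)
  have g_int: "integrable M g"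
    by (rule finite_measure.integrable_if_integrable_norm_powr[OF M p])
      (use g_Lp in \<open>auto simp: Lp_space_def\<close>)
  obtain \<psi> where \<psi>: "\<And>u. u \<in> {0..T} \<Longrightarrow> is_cond_exp M (F u) g (\<psi> u)" and "\<psi> t = h"
    using cond_exp_process_exists[where F=F, OF M sub g_int h] by blast
  have "\<psi> u \<in> Sp M (F u) p (\<Psi> u)" if u: "u \<in> {0..T}" for u
  proof -
    have "\<psi> u \<in> cond_exp_selections M (F u) p (\<Psi> T) \<inter> Lp_space M (F u) p"
      using g \<psi>[OF u] finite_measure_subalgebra.Lp_space_is_cond_exp[OF F[OF u] p g_Lp]
      by (auto simp: cond_exp_selections_def)
    then show ?thesis
      using Lp_closure_superset Sp_eq_Lp_closure_cond_exp_selections[OF mart u] by blast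
  qed
  moreover have "martingale_E M F T \<psi>"
    using \<psi> mono by (rule martingale_E_if_is_cond_exp)
  ultimately have "\<psi> \<in> Msel M F T p \<Psi>"
    by (simp add: Msel_def)
  with \<open>\<psi> t = h\<close> show "h \<in> {\<psi> t | \<psi>. \<psi> \<in> Msel M F T p \<Psi>}"
    by blast
qed

lemma space_nat_filtration [simp]: "space (nat_filtration M W t) = space M"
  unfolding nat_filtration_def by (rule space_measure_of_conv)

lemma sets_nat_filtration_mono:
  assumes "s \<le> t"
  shows "sets (nat_filtration M W s) \<subseteq> sets (nat_filtration M W t)"
  unfolding nat_filtration_def
proof (rule measure_of_subset)
  show "{W r -` B \<inter> space M | r B. r \<in> {0..t} \<and> B \<in> sets borel} \<union> null_sets M \<subseteq> Pow (space M)"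
    using sets.sets_into_space by auto
  have "{W r -` B \<inter> space M | r B. r \<in> {0..s} \<and> B \<in> sets borel}
    \<subseteq> {W r -` B \<inter> space M | r B. r \<in> {0..t} \<and> B \<in> sets borel}"
    using assms by (intro Collect_mono) force
  then show "{W r -` B \<inter> space M | r B. r \<in> {0..s} \<and> B \<in> sets borel} \<union> null_sets M
    \<subseteq> {W r -` B \<inter> space M | r B. r \<in> {0..t} \<and> B \<in> sets borel} \<union> null_sets M"
    by blast
qed

lemma subalgebra_nat_filtration:
  assumes "sets M = sets (nat_filtration M W T)" "t \<le> T"
  shows "subalgebra M (nat_filtration M W t)"
  using assms sets_nat_filtration_mono[OF assms(2), of M W] unfolding subalgebra_def by auto

theorem lemma5p2:
  fixes M :: "'a measure" and W :: "real \<Rightarrow> 'a \<Rightarrow> real" and T p :: real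
    and \<Psi> :: "real \<Rightarrow> 'a \<Rightarrow> 'e::{banach,second_countable_topology} set"
  assumes "prob_space M"
    and "umd TYPE('e)"
    and "T > 0" and "p > 1"
    and "brownian_motion M T W"
    and "sets M = sets (nat_filtration M W T)"
    and "\<forall>t\<in>{0..T}. Kc_valued M (\<Psi> t)"
    and "\<forall>t\<in>{0..T}. setvalued_measurable (nat_filtration M W t) (\<Psi> t)"
    and "set_martingale M (nat_filtration M W) T p \<Psi>"
    and "\<exists>v. v \<in> borel_measurable M \<and> integrable M (\<lambda>x. \<bar>v x\<bar> powr p) \<and>
           (AE x in M. \<forall>y\<in>\<Psi> T x. norm y \<le> v x)"
  shows "\<forall>t\<in>{0..T}. dec_closure M (nat_filtration M W t) p
             {\<psi> t | \<psi>. \<psi> \<in> Msel M (nat_filtration M W) T p \<Psi>}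
           = Sp M (nat_filtration M W t) p (\<Psi> t)"
proof
  fix t assume t: "t \<in> {0..T}"
  let ?F = "nat_filtration M W" and ?\<Delta> = "{\<psi> t | \<psi>. \<psi> \<in> Msel M (nat_filtration M W) T p \<Psi>}"
  interpret prob_space M
    by (rule assms(1))
  have p: "p > 0" "p \<ge> 1"
    using assms(4) by simp_all
  have sub: "subalgebra M (?F u)" if "u \<in> {0..T}" for u
    using subalgebra_nat_filtration[OF assms(6)] that by simp
  have closed: "\<forall>x\<in>space M. closed (\<Psi> t x)"
    using assms(7) t by (simp add: Kc_valued_def)
  have "?\<Delta> \<subseteq> Sp M (?F t) p (\<Psi> t)"
    using t by (auto simp: Msel_def)
  moreover have "cond_exp_selections M (?F t) p (\<Psi> T) \<subseteq> ?\<Delta>"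
    by (rule cond_exp_selections_subset_martingale_selections[OF
          finite_measure_axioms sub sets_nat_filtration_mono p(2) assms(9) t])
  then have "Sp M (?F t) p (\<Psi> t) \<subseteq> Lp_closure M (?F t) p ?\<Delta>"
    unfolding Sp_eq_Lp_closure_cond_exp_selections[OF assms(9) t] by (rule Lp_closure_mono)
  ultimately show "dec_closure M (?F t) p ?\<Delta> = Sp M (?F t) p (\<Psi> t)"
    by (rule dec_closure_eq_Sp[OF sub[OF t] p(1) closed])
qed

end
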